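(* There is a continuous function $f:2^{\omega}\to 2^{\omega}$ such that $f^{-1}[\{x\}]\notin I_0$ for every $x\in 2^{\omega}$. Consequently the $\sigma$-ideal $I_0$ has property (M) and does not have property (D).
   Context: $2^\omega$ is the Cantor group with coordinatewise addition modulo 2, written $\oplus$ or $+$. $I_0$ is the $\sigma$-ideal on $2^\omega$ generated by the family of all Borel sets $B\subseteq 2^\omega$ for which there is a nonempty perfect set $P\subseteq 2^\omega$ such that the sets $B\oplus x$ ($x\in P$) are pairwise disjoint; $I_0$ is translation invariant and proper. Property (M) for an ideal $I$ on a Polish space $X$: there is a Borel function $f:X\to X$ with $f^{-1}[\{x\}]\notin I$ for every $x\in X$. Property (D) for a translation-invariant ideal $I$ on a Polish abelian group $X$: there are a Borel set $B\notin I$ and a nonempty perfect set $P\subseteq X$ such that $(B+x)\cap(B+y)=\emptyset$ for all distinct $x,y\in P$. *)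

theory Defs
  imports "HOL-Analysis.Analysis"
begin

type_synonym cantor = "nat \<Rightarrow> bool"

definition cadd :: "cantor \<Rightarrow> cantor \<Rightarrow> cantor" (infixl "\<oplus>\<^sub>c" 65) where
  "x \<oplus>\<^sub>c y = (\<lambda>n. x n \<noteq> y n)"

definition ctrans :: "cantor set \<Rightarrow> cantor \<Rightarrow> cantor set" where
  "ctrans B x = (\<lambda>b. b \<oplus>\<^sub>c x) ` B"

definition nonempty_perfect :: "'a::topological_space set \<Rightarrow> bool" where
  "nonempty_perfect P \<longleftrightarrow> P \<noteq> {} \<and> closed P \<and> (\<forall>x\<in>P. x islimpt P)"

definition I0_gen :: "cantor set set" where
  "I0_gen = {B \<in> sets borel. \<exists>P. nonempty_perfect P \<and>
      (\<forall>x\<in>P. \<forall>y\<in>P. x \<noteq> y \<longrightarrow> ctrans B x \<inter> ctrans B y = {})}"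

definition I0 :: "cantor set set" where
  "I0 = {A. \<exists>C :: nat \<Rightarrow> cantor set. (\<forall>n. C n \<in> I0_gen) \<and> A \<subseteq> (\<Union>n. C n)}"

definition propM :: "'a::topological_space set set \<Rightarrow> bool" where
  "propM I \<longleftrightarrow> (\<exists>f :: 'a \<Rightarrow> 'a. f \<in> borel \<rightarrow>\<^sub>M borel \<and> (\<forall>x. f -` {x} \<notin> I))"

definition propD :: "cantor set set \<Rightarrow> bool" where
  "propD I \<longleftrightarrow> (\<exists>B \<in> sets borel. B \<notin> I \<and> (\<exists>P. nonempty_perfect P \<and>
      (\<forall>x\<in>P. \<forall>y\<in>P. x \<noteq> y \<longrightarrow> ctrans B x \<inter> ctrans B y = {})))"

end

theory Submission
  imports Defs
begin

text \<open>
  The witness f reads x in blocks: block k consists of 2^(k+1) sub-blocks of length k+2, indexed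
  by the subsets S of {0..k}, and bit k of f x records whether one of these sub-blocks vanishes.
  Each output bit depends on finitely many input bits, so f is continuous.

  Suppose a fibre f^-1{z} were covered by generators C_n with perfect sets P_n of pairwise
  disjoint translates. For indices j coding pairs (n, N) pick distinct p_j, q_j in P_n agreeing so
  long that d_j = p_j + q_j vanishes on all blocks below j. Then Phi c = u + (sum of the d_j with
  c_j = 1) is continuous and Phi (c + e_j) = Phi c + d_j. On block k, Phi c - u only takes the
  2^(k+1) values determined by c_0, ..., c_k, while a sub-block has 2^(k+2) values, so u can be
  chosen with f (Phi c) = z for all c. The Borel sets Phi^-1 C_n cover 2^omega, so by Baire
  category one of them is comeager in some cylinder of length N; flipping a coordinate j >= N
  preserves that cylinder and meagerness, so some c and c + e_j both lie in Phi^-1 C_n. Then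
  Phi c + p_j lies in both C_n + p_j and C_n + q_j.
\<close>

section \<open>Topology of the Cantor space\<close>

lemma compact_space_cantor: "compact_space (euclidean :: cantor topology)"
proof -
  have "compact_space (euclidean :: bool topology)"
    by (simp add: compact_space_def finite_imp_compact)
  then show ?thesis
    by (metis euclidean_product_topology compact_space_product_topology)
qed

lemma Hausdorff_space_cantor: "Hausdorff_space (euclidean :: cantor topology)"
proof -
  have "Hausdorff_space (euclidean :: bool topology)"
    unfolding Hausdorff_space_def disjnt_def
    by (metis Int_insert_left_if0 inf_bot_left insertCI open_discrete open_openin singleton_iff)
  then show ?thesis
    by (metis euclidean_product_topology Hausdorff_space_product_topology)
qed

lemma cantor_Baire:
  fixes \<G> :: "cantor set set"
  assumes "countable \<G>" "\<And>T. T \<in> \<G> \<Longrightarrow> closed T \<and> interior T = {}"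
  shows "interior (\<Union>\<G>) = {}"
proof -
  have "euclidean interior_of \<Union>\<G> = {}"
  proof (rule Baire_category_alt)
    show "completely_metrizable_space (euclidean :: cantor topology) \<or>
        locally_compact_space (euclidean :: cantor topology) \<and> regular_space (euclidean :: cantor topology)"
      by (simp add: compact_imp_locally_compact_space compact_Hausdorff_imp_regular_space
          compact_space_cantor Hausdorff_space_cantor)
  qed (use assms in \<open>auto simp: closed_closedin[symmetric]\<close>)
  then show ?thesis
    by simp
qed

definition cylinder :: "cantor \<Rightarrow> nat \<Rightarrow> cantor set" where
  "cylinder x N = {y. \<forall>i<N. y i = x i}"

lemma cylinder_self: "x \<in> cylinder x N"
  by (simp add: cylinder_def)

lemma open_agree_on:
  fixes x :: "'i \<Rightarrow> 'a::discrete_topology"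
  assumes "finite D"
  shows "open {y. \<forall>i\<in>D. y i = x i}"
  using product_topology_basis'[of D "\<lambda>i. {x i}" id] assms by (simp add: open_discrete)

lemma open_cylinder: "open (cylinder x N)"
proof -
  have "cylinder x N = {y. \<forall>i\<in>{..<N}. y i = x i}"
    by (auto simp: cylinder_def)
  then show ?thesis
    using open_agree_on[of "{..<N}" x] by simp
qed

lemma open_contains_cylinder:
  assumes "open U" "x \<in> U"
  obtains N where "cylinder x N \<subseteq> U"
proof -
  obtain V where V: "finite {i. V i \<noteq> UNIV}" "x \<in> Pi\<^sub>E UNIV V" "Pi\<^sub>E UNIV V \<subseteq> U"
    using assms unfolding open_fun_def openin_product_topology_alt by auto
  obtain N where N: "\<And>i. V i \<noteq> UNIV \<Longrightarrow> i < N"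
    using finite_nat_bounded[OF V(1)] by auto
  have "cylinder x N \<subseteq> Pi\<^sub>E UNIV V"
    using V(2) N by (fastforce simp: cylinder_def PiE_iff)
  then show thesis
    using V(3) that by (meson order_trans)
qed

lemma continuous_on_finitely_determined:
  fixes g :: "('i \<Rightarrow> 'a::discrete_topology) \<Rightarrow> 'b::topological_space"
  assumes "finite D" "\<And>x y. (\<forall>i\<in>D. x i = y i) \<Longrightarrow> g x = g y"
  shows "continuous_on UNIV g"
proof -
  have "open (g -` B)" for B
  proof -
    have "g -` B = (\<Union>x\<in>g -` B. {y. \<forall>i\<in>D. y i = x i})"
      using assms(2) by auto
    moreover have "open (\<Union>x\<in>g -` B. {y. \<forall>i\<in>D. y i = x i})"
      by (intro open_UN ballI open_agree_on[OF assms(1)])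
    ultimately show ?thesis
      by simp
  qed
  then show ?thesis
    by (simp add: continuous_on_open_vimage)
qed

lemma continuous_on_coordinatewise_finitely_determined:
  fixes g :: "('i \<Rightarrow> 'a::discrete_topology) \<Rightarrow> 'j \<Rightarrow> 'b::topological_space"
  assumes "\<And>y. finite (D y)" "\<And>x x' y. (\<forall>i\<in>D y. x i = x' i) \<Longrightarrow> g x y = g x' y"
  shows "continuous_on UNIV g"
  by (intro continuous_on_coordinatewise_then_product continuous_on_finitely_determined
      [OF assms(1)] assms(2))

section \<open>Meager sets\<close>

definition meager :: "'a::topological_space set \<Rightarrow> bool" where
  "meager A \<longleftrightarrow> (\<exists>\<K>. countable \<K> \<and> (\<forall>K\<in>\<K>. closed K \<and> interior K = {}) \<and> A \<subseteq> \<Union>\<K>)"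

lemma meager_subset: "meager B \<Longrightarrow> A \<subseteq> B \<Longrightarrow> meager A"
  unfolding meager_def by (meson order_trans)

lemma closed_empty_interior_imp_meager: "closed K \<Longrightarrow> interior K = {} \<Longrightarrow> meager K"
  unfolding meager_def by (intro exI[of _ "{K}"]) auto

lemma meager_Un:
  assumes "meager A" "meager B"
  shows "meager (A \<union> B)"
proof -
  obtain \<K>\<^sub>A \<K>\<^sub>B where
    "countable \<K>\<^sub>A" "\<forall>K\<in>\<K>\<^sub>A. closed K \<and> interior K = {}" "A \<subseteq> \<Union>\<K>\<^sub>A"
    "countable \<K>\<^sub>B" "\<forall>K\<in>\<K>\<^sub>B. closed K \<and> interior K = {}" "B \<subseteq> \<Union>\<K>\<^sub>B"
    using assms unfolding meager_def by blast
  then show ?thesis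
    unfolding meager_def by (intro exI[of _ "\<K>\<^sub>A \<union> \<K>\<^sub>B"]) auto
qed

lemma meager_UN:
  assumes "countable I" "\<And>i. i \<in> I \<Longrightarrow> meager (A i)"
  shows "meager (\<Union>i\<in>I. A i)"
proof -
  obtain \<K> where \<K>: "\<And>i. i \<in> I \<Longrightarrow>
      countable (\<K> i) \<and> (\<forall>K\<in>\<K> i. closed K \<and> interior K = {}) \<and> A i \<subseteq> \<Union>(\<K> i)"
    using assms(2) unfolding meager_def by metis
  have "countable (\<Union>i\<in>I. \<K> i)"
    using assms(1) \<K> by auto
  moreover have "\<forall>K\<in>(\<Union>i\<in>I. \<K> i). closed K \<and> interior K = {}"
    using \<K> by auto
  moreover have "(\<Union>i\<in>I. A i) \<subseteq> \<Union>(\<Union>i\<in>I. \<K> i)"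
    using \<K> by fastforce
  ultimately show ?thesis
    unfolding meager_def by blast
qed

lemma meager_vimage_homeomorphism:
  assumes "homeomorphism UNIV UNIV f g" "meager A"
  shows "meager (f -` A)"
proof -
  have cont: "continuous_on UNIV f" "continuous_on UNIV g"
    and inv: "\<And>x. g (f x) = x" "\<And>y. f (g y) = y"
    using assms(1) by (auto simp: homeomorphism_def)
  have "interior (f -` K) = {}" if "interior K = {}" for K
  proof -
    have "g -` interior (f -` K) \<subseteq> interior K"
      using interior_subset[of "f -` K"] inv(2)
      by (intro interior_maximal open_vimage[OF _ cont(2)]) fastforce+
    then have "f x \<notin> g -` interior (f -` K)" for x
      using that by blast
    then show ?thesis
      using inv(1) by (metis equals0I vimageI2)
  qed
  moreover obtain \<K> where "countable \<K>" "\<forall>K\<in>\<K>. closed K \<and> interior K = {}" "A \<subseteq> \<Union>\<K>"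
    using assms(2) unfolding meager_def by blast
  moreover have "f -` A \<subseteq> \<Union>(vimage f ` \<K>)"
    using \<open>A \<subseteq> \<Union>\<K>\<close> by blast
  ultimately show ?thesis
    unfolding meager_def using closed_vimage[OF _ cont(1)]
    by (intro exI[of _ "vimage f ` \<K>"]) auto
qed

lemma not_meager_open_cantor:
  fixes U :: "cantor set"
  assumes "open U" "U \<noteq> {}"
  shows "\<not> meager U"
proof
  assume "meager U"
  then obtain \<K> where \<K>: "countable \<K>" "\<And>K. K \<in> \<K> \<Longrightarrow> closed K \<and> interior K = {}"
    and "U \<subseteq> \<Union>\<K>"
    unfolding meager_def by blast
  from \<K> have "interior (\<Union>\<K>) = {}"
    by (rule cantor_Baire)
  moreover have "U \<subseteq> interior (\<Union>\<K>)"
    using \<open>U \<subseteq> \<Union>\<K>\<close> assms(1) by (rule interior_maximal)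
  ultimately show False
    using assms(2) by blast
qed

definition Baire_property :: "'a::topological_space set \<Rightarrow> bool" where
  "Baire_property A \<longleftrightarrow> (\<exists>U. open U \<and> meager (sym_diff A U))"

lemma Baire_property_open: "open U \<Longrightarrow> Baire_property U"
  unfolding Baire_property_def using closed_empty_interior_imp_meager[of "{}"] by auto

text \<open>The boundary of the closed set - U is nowhere dense, so - A differs from the interior of
  - U by a meager set.\<close>
lemma Baire_property_Compl:
  assumes "Baire_property A"
  shows "Baire_property (- A)"
proof -
  obtain U where U: "open U" "meager (sym_diff A U)"
    using assms unfolding Baire_property_def by blast
  define V where "V = interior (- U)"
  have "interior (- U - V) \<subseteq> V"
    unfolding V_def by (rule interior_mono) blast
  then have "interior (- U - V) = {}"
    using interior_subset by blast
  then have "meager (- U - V)"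
    using U(1) by (intro closed_empty_interior_imp_meager) (auto simp: V_def)
  with U(2) have "meager (sym_diff A U \<union> (- U - V))"
    by (rule meager_Un)
  moreover have "sym_diff (- A) V \<subseteq> sym_diff A U \<union> (- U - V)"
    using interior_subset[of "- U"] by (auto simp: V_def)
  ultimately have "meager (sym_diff (- A) V)"
    by (rule meager_subset)
  then show ?thesis
    unfolding Baire_property_def V_def by blast
qed

lemma Baire_property_UN:
  assumes "\<And>i::nat. Baire_property (A i)"
  shows "Baire_property (\<Union>i. A i)"
proof -
  obtain U where U: "\<And>i. open (U i)" "\<And>i. meager (sym_diff (A i) (U i))"
    using assms unfolding Baire_property_def by metis
  have "meager (\<Union>i. sym_diff (A i) (U i))"
    by (rule meager_UN) (auto simp: U(2))
  then have "meager (sym_diff (\<Union>i. A i) (\<Union>i. U i))"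
    by (rule meager_subset) blast
  then show ?thesis
    unfolding Baire_property_def using U(1) by blast
qed

lemma Baire_property_borel:
  assumes "A \<in> sets borel"
  shows "Baire_property A"
proof -
  have "A \<in> sigma_sets UNIV {S. open S}"
    using assms by (simp add: sets_borel)
  then show ?thesis
  proof (induction rule: sigma_sets.induct)
    case (Compl a)
    then show ?case
      using Baire_property_Compl by (simp add: Compl_eq_Diff_UNIV[symmetric])
  qed (auto intro: Baire_property_open Baire_property_UN)
qed

definition flip :: "nat \<Rightarrow> cantor \<Rightarrow> cantor" where
  "flip j c = c(j := \<not> c j)"

lemma flip_flip [simp]: "flip j (flip j c) = c"
  by (auto simp: flip_def)

lemma homeomorphism_flip: "homeomorphism UNIV UNIV (flip j) (flip j)"
proof -
  have "continuous_on UNIV (flip j)"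
    by (rule continuous_on_coordinatewise_finitely_determined[of "\<lambda>y. {y}"]) (auto simp: flip_def)
  then show ?thesis
    by (auto simp: homeomorphism_def image_iff) (metis flip_flip)
qed

lemma flip_cylinder: "N \<le> j \<Longrightarrow> c \<in> cylinder x N \<Longrightarrow> flip j c \<in> cylinder x N"
  by (auto simp: cylinder_def flip_def)

lemma Borel_nonmeager_flip_pair:
  assumes "A \<in> sets borel" "\<not> meager A"
  shows "\<exists>N. \<forall>j\<ge>N. \<exists>c. c \<in> A \<and> flip j c \<in> A"
proof -
  obtain U where U: "open U" "meager (sym_diff A U)"
    using Baire_property_borel[OF assms(1)] unfolding Baire_property_def by blast
  have "U \<noteq> {}"
    using U(2) assms(2) by auto
  then obtain N x where N: "cylinder x N \<subseteq> U"
    using open_contains_cylinder[OF U(1)] by blast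
  have "\<exists>c. c \<in> A \<and> flip j c \<in> A" if "N \<le> j" for j
  proof -
    let ?E = "cylinder x N - A"
    have "meager ?E"
      using U(2) by (rule meager_subset) (use N in blast)
    then have "meager (?E \<union> flip j -` ?E)"
      by (intro meager_Un meager_vimage_homeomorphism[OF homeomorphism_flip])
    then have "\<not> cylinder x N \<subseteq> ?E \<union> flip j -` ?E"
      using not_meager_open_cantor[OF open_cylinder] cylinder_self meager_subset by blast
    then obtain c where "c \<in> cylinder x N" "c \<notin> ?E" "flip j c \<notin> ?E"
      by blast
    then show ?thesis
      using flip_cylinder[OF that] by blast
  qed
  then show ?thesis
    by blast
qed

lemma Borel_cover_flip_pair:
  assumes "\<And>n::nat. A n \<in> sets borel" "(\<Union>n. A n) = UNIV"
  shows "\<exists>n N. \<forall>j\<ge>N. \<exists>c. c \<in> A n \<and> flip j c \<in> A n"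
proof -
  have "\<exists>n. \<not> meager (A n)"
  proof (rule ccontr)
    assume "\<nexists>n. \<not> meager (A n)"
    then have "meager (\<Union>n. A n)"
      by (intro meager_UN) auto
    then show False
      using not_meager_open_cantor[of UNIV] assms(2) by simp
  qed
  then show ?thesis
    using Borel_nonmeager_flip_pair[OF assms(1)] by blast
qed

section \<open>The witness map\<close>

text \<open>The sum of the d j with c j in 2^omega. It is only meaningful when every y satisfies d j y
  for finitely many j, since card of an infinite set is 0.\<close>
definition cantor_sum :: "(nat \<Rightarrow> cantor) \<Rightarrow> cantor \<Rightarrow> cantor" where
  "cantor_sum d c y \<longleftrightarrow> odd (card {j. c j \<and> d j y})"

lemma cantor_sum_cong:
  assumes "\<And>j. d j y \<Longrightarrow> c j = c' j"
  shows "cantor_sum d c y = cantor_sum d c' y"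
proof -
  have "{j. c j \<and> d j y} = {j. c' j \<and> d j y}"
    using assms by blast
  then show ?thesis
    by (simp add: cantor_sum_def)
qed

lemma continuous_on_translated_cantor_sum:
  assumes "\<And>j y. d j y \<Longrightarrow> j \<le> y"
  shows "continuous_on UNIV (\<lambda>c. u \<oplus>\<^sub>c cantor_sum d c)"
proof (rule continuous_on_coordinatewise_finitely_determined[of "\<lambda>y. {..y}"])
  fix c c' :: cantor and y
  assume "\<forall>i\<in>{..y}. c i = c' i"
  then have "cantor_sum d c y = cantor_sum d c' y"
    using assms by (intro cantor_sum_cong) auto
  then show "(u \<oplus>\<^sub>c cantor_sum d c) y = (u \<oplus>\<^sub>c cantor_sum d c') y"
    by (simp add: cadd_def)
qed simp

lemma cantor_sum_flip:
  assumes "\<And>j y. d j y \<Longrightarrow> j \<le> y"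
  shows "cantor_sum d (flip j c) = cantor_sum d c \<oplus>\<^sub>c d j"
proof
  fix y
  show "cantor_sum d (flip j c) y = (cantor_sum d c \<oplus>\<^sub>c d j) y"
  proof (cases "d j y")
    case False
    then have "{i. flip j c i \<and> d i y} = {i. c i \<and> d i y}"
      by (auto simp: flip_def)
    then show ?thesis
      using False by (simp add: cantor_sum_def cadd_def)
  next
    case True
    define R where "R = {i. c i \<and> d i y} - {j}"
    have "finite R" "j \<notin> R"
      using assms by (auto simp: R_def intro: finite_subset[of _ "{..y}"])
    moreover have "{i. c i \<and> d i y} = (if c j then insert j R else R)"
      and "{i. flip j c i \<and> d i y} = (if c j then R else insert j R)"
      using True by (auto simp: R_def flip_def)
    ultimately show ?thesis
      using True by (simp add: cantor_sum_def cadd_def)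
  qed
qed

definition block_coord :: "nat \<Rightarrow> nat set \<Rightarrow> nat \<Rightarrow> nat" where
  "block_coord k S i = prod_encode (k, prod_encode (set_encode S, i))"

definition zero_block_map :: "cantor \<Rightarrow> cantor" where
  "zero_block_map x k \<longleftrightarrow> (\<exists>S\<subseteq>{..k}. \<forall>i<k+2. \<not> x (block_coord k S i))"

definition block_support :: "nat \<Rightarrow> nat set" where
  "block_support k = (\<lambda>(S, i). block_coord k S i) ` (Pow {..k} \<times> {..<k+2})"

lemma finite_block_support: "finite (block_support k)"
  by (simp add: block_support_def)

lemma block_coord_in_support: "S \<subseteq> {..k} \<Longrightarrow> i < k+2 \<Longrightarrow> block_coord k S i \<in> block_support k"
  unfolding block_support_def by (rule image_eqI[of _ _ "(S, i)"]) auto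

lemma continuous_on_zero_block_map: "continuous_on UNIV zero_block_map"
proof (rule continuous_on_coordinatewise_finitely_determined[of block_support])
  fix x x' :: cantor and k
  assume "\<forall>i\<in>block_support k. x i = x' i"
  then show "zero_block_map x k = zero_block_map x' k"
    unfolding zero_block_map_def by (metis (no_types, lifting) block_coord_in_support)
qed (rule finite_block_support)

definition block_bound :: "nat \<Rightarrow> nat" where
  "block_bound j = Suc (Max (insert j (\<Union>k<j. block_support k)))"

lemma less_block_bound: "j < block_bound j"
  by (simp add: block_bound_def finite_block_support le_imp_less_Suc)

lemma block_support_less_block_bound:
  assumes "k < j" "y \<in> block_support k"
  shows "y < block_bound j"
proof -
  have "y \<le> Max (insert j (\<Union>k<j. block_support k))"
    using assms by (intro Max_ge) (auto simp: finite_block_support)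
  then show ?thesis
    by (simp add: block_bound_def)
qed

lemma exists_subset_avoiding_patterns:
  fixes v :: "'a \<Rightarrow> nat \<Rightarrow> bool"
  assumes "finite I" "card I < 2 ^ n"
  shows "\<exists>T\<subseteq>{..<n}. \<forall>S\<in>I. T \<noteq> {i. i < n \<and> v S i}"
proof (rule ccontr)
  assume "\<not> ?thesis"
  then have "Pow {..<n} \<subseteq> (\<lambda>S. {i. i < n \<and> v S i}) ` I"
    by blast
  then have "card (Pow {..<n}) \<le> card I"
    by (meson assms(1) card_image_le card_mono finite_imageI le_trans)
  then show False
    using assms(2) by (simp add: card_Pow)
qed

text \<open>Here v S S' is what coefficients c with {j \<le> k. c j} = S contribute to sub-block S' of
  block k. For b = False each sub-block of w avoids all 2^(k+1) contributions, by counting.\<close>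
lemma exists_block_offset:
  fixes v :: "nat set \<Rightarrow> nat set \<Rightarrow> nat \<Rightarrow> bool"
  shows "\<exists>w. \<forall>S\<subseteq>{..k}. (\<exists>S'\<subseteq>{..k}. \<forall>i<k+2. w S' i = v S S' i) = b"
proof (cases b)
  case True
  then show ?thesis
    by (intro exI[of _ "\<lambda>S'. v S' S'"]) blast
next
  case False
  have "\<forall>S'. \<exists>T\<subseteq>{..<k+2}. \<forall>S\<in>Pow {..k}. T \<noteq> {i. i < k+2 \<and> v S S' i}"
    by (intro allI exists_subset_avoiding_patterns) (auto simp: card_Pow)
  then obtain T where T: "\<And>S'. T S' \<subseteq> {..<k+2}"
    "\<And>S S'. S \<subseteq> {..k} \<Longrightarrow> T S' \<noteq> {i. i < k+2 \<and> v S S' i}"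
    by (metis PowI)
  have "\<not> (\<forall>i<k+2. (i \<in> T S') = v S S' i)" if "S \<subseteq> {..k}" for S S'
    using T(1)[of S'] T(2)[OF that, of S'] by auto
  then show ?thesis
    using False by (intro exI[of _ "\<lambda>S' i. i \<in> T S'"]) simp
qed

lemma exists_block_function: "\<exists>u. \<forall>k S i. finite S \<longrightarrow> u (block_coord k S i) = w k S i"
  by (intro exI[of _ "\<lambda>y. case prod_decode y of (k, r) \<Rightarrow>
      case prod_decode r of (s, i) \<Rightarrow> w k (set_decode s) i"]) (simp add: block_coord_def)

lemma exists_offset_into_fibre:
  assumes "\<And>j y. y < block_bound j \<Longrightarrow> \<not> d j y"
  shows "\<exists>u. \<forall>c. zero_block_map (u \<oplus>\<^sub>c cantor_sum d c) = z"
proof -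
  define v where "v k S S' i = cantor_sum d (\<lambda>j. j \<in> S) (block_coord k S' i)" for k S S' i
  have "\<forall>k. \<exists>w. \<forall>S\<subseteq>{..k}. (\<exists>S'\<subseteq>{..k}. \<forall>i<k+2. w S' i = v k S S' i) = z k"
    by (intro allI exists_block_offset)
  then obtain w where w: "\<And>k S. S \<subseteq> {..k} \<Longrightarrow> (\<exists>S'\<subseteq>{..k}. \<forall>i<k+2. w k S' i = v k S S' i) = z k"
    by metis
  obtain u where u: "\<And>k S i. finite S \<Longrightarrow> u (block_coord k S i) = w k S i"
    using exists_block_function by metis
  have "zero_block_map (u \<oplus>\<^sub>c cantor_sum d c) k = z k" for c k
  proof -
    let ?S = "{j. j \<le> k \<and> c j}"
    have "cantor_sum d c (block_coord k S' i) = v k ?S S' i" if "S' \<subseteq> {..k}" "i < k+2" for S' i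
    proof -
      have "j \<le> k" if "d j (block_coord k S' i)" for j
        using that assms block_support_less_block_bound
          block_coord_in_support[OF \<open>S' \<subseteq> {..k}\<close> \<open>i < k+2\<close>]
        by (meson not_le)
      then show ?thesis
        unfolding v_def by (intro cantor_sum_cong) auto
    qed
    then have "zero_block_map (u \<oplus>\<^sub>c cantor_sum d c) k \<longleftrightarrow>
        (\<exists>S'\<subseteq>{..k}. \<forall>i<k+2. w k S' i = v k ?S S' i)"
      unfolding zero_block_map_def cadd_def using u finite_subset[OF _ finite_atMost]
      by (metis (no_types, lifting))
    also have "\<dots> = z k"
      by (rule w) auto
    finally show ?thesis .
  qed
  then show ?thesis
    by blast
qed

lemma nonempty_perfect_close_pair:
  fixes P :: "cantor set"
  assumes "nonempty_perfect P"
  shows "\<exists>p\<in>P. \<exists>q\<in>P. p \<noteq> q \<and> (\<forall>i<m. p i = q i)"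
proof -
  obtain p where p: "p \<in> P" "p islimpt P"
    using assms unfolding nonempty_perfect_def by blast
  then obtain q where "q \<in> P" "q \<in> cylinder p m" "q \<noteq> p"
    using islimptE[OF p(2) cylinder_self open_cylinder] by metis
  then show ?thesis
    using p(1) by (auto simp: cylinder_def)
qed

lemma disjoint_translates_difference:
  assumes "\<forall>x\<in>P. \<forall>y\<in>P. x \<noteq> y \<longrightarrow> ctrans C x \<inter> ctrans C y = {}"
    and "p \<in> P" "q \<in> P" "p \<noteq> q" "b \<in> C"
  shows "b \<oplus>\<^sub>c (p \<oplus>\<^sub>c q) \<notin> C"
proof
  assume "b \<oplus>\<^sub>c (p \<oplus>\<^sub>c q) \<in> C"
  moreover have "b \<oplus>\<^sub>c p = (b \<oplus>\<^sub>c (p \<oplus>\<^sub>c q)) \<oplus>\<^sub>c q"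
    by (auto simp: cadd_def)
  ultimately have "b \<oplus>\<^sub>c p \<in> ctrans C p \<inter> ctrans C q"
    using assms(5) unfolding ctrans_def by blast
  then show False
    using assms(1-4) by blast
qed

lemma Borel_cover_of_fibre_translate_pair:
  assumes d_vanishes: "\<And>j y. y < block_bound j \<Longrightarrow> \<not> d j y"
    and C: "\<And>n::nat. C n \<in> sets borel" and cover: "zero_block_map -` {z} \<subseteq> (\<Union>n. C n)"
  shows "\<exists>n N. \<forall>j\<ge>N. \<exists>b. b \<in> C n \<and> b \<oplus>\<^sub>c d j \<in> C n"
proof -
  have d_below: "\<And>j y. d j y \<Longrightarrow> j \<le> y"
  proof -
    fix j y
    assume "d j y"
    then show "j \<le> y"
      using d_vanishes[of y j] less_block_bound[of j] by linarith
  qed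
  obtain u where u: "\<And>c. zero_block_map (u \<oplus>\<^sub>c cantor_sum d c) = z"
    using exists_offset_into_fibre[of d, OF d_vanishes] by blast
  define \<Phi> where "\<Phi> = (\<lambda>c. u \<oplus>\<^sub>c cantor_sum d c)"
  have "\<Phi> \<in> borel_measurable borel"
    unfolding \<Phi>_def
    by (rule borel_measurable_continuous_onI[OF continuous_on_translated_cantor_sum[of d, OF d_below]])
  then have "\<Phi> -` C n \<in> sets borel" for n
    using C[of n] by (simp add: measurable_sets_borel)
  moreover have "(\<Union>n. \<Phi> -` C n) = UNIV"
    using cover u by (force simp: \<Phi>_def)
  ultimately obtain n N where flip_pair: "\<And>j. N \<le> j \<Longrightarrow> \<exists>c. \<Phi> c \<in> C n \<and> \<Phi> (flip j c) \<in> C n"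
    using Borel_cover_flip_pair[of "\<lambda>n. \<Phi> -` C n"] by blast
  have "\<Phi> (flip j c) = \<Phi> c \<oplus>\<^sub>c d j" for j c
    using cantor_sum_flip[of d, OF d_below] by (simp add: \<Phi>_def) (auto simp: cadd_def)
  then show ?thesis
    using flip_pair by metis
qed

lemma zero_block_map_fibre_not_I0: "zero_block_map -` {z} \<notin> I0"
proof
  assume "zero_block_map -` {z} \<in> I0"
  then obtain C :: "nat \<Rightarrow> cantor set"
    where C: "\<And>n. C n \<in> I0_gen" and cover: "zero_block_map -` {z} \<subseteq> (\<Union>n. C n)"
    by (auto simp: I0_def)
  have "\<forall>n. \<exists>P. nonempty_perfect P \<and> (\<forall>x\<in>P. \<forall>y\<in>P. x \<noteq> y \<longrightarrow> ctrans (C n) x \<inter> ctrans (C n) y = {})"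
    using C unfolding I0_gen_def by blast
  then obtain P where P: "\<And>n. nonempty_perfect (P n)"
    and P_disjoint: "\<And>n. \<forall>x\<in>P n. \<forall>y\<in>P n. x \<noteq> y \<longrightarrow> ctrans (C n) x \<inter> ctrans (C n) y = {}"
    by metis
  text \<open>Index j serves generator number fst (prod_decode j), so every generator is served by
    arbitrarily large indices.\<close>
  have "\<forall>j. \<exists>p\<in>P (fst (prod_decode j)). \<exists>q\<in>P (fst (prod_decode j)).
      p \<noteq> q \<and> (\<forall>i<block_bound j. p i = q i)"
    using nonempty_perfect_close_pair[OF P] by blast
  then obtain p q where pq: "\<And>j. p j \<in> P (fst (prod_decode j))" "\<And>j. q j \<in> P (fst (prod_decode j))"
    "\<And>j. p j \<noteq> q j" "\<And>j i. i < block_bound j \<Longrightarrow> p j i = q j i"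
    by metis
  have "\<And>j y. y < block_bound j \<Longrightarrow> \<not> (p j \<oplus>\<^sub>c q j) y"
    using pq(4) by (simp add: cadd_def)
  moreover have "\<And>n. C n \<in> sets borel"
    using C by (simp add: I0_gen_def)
  ultimately obtain n N where N: "\<And>j. N \<le> j \<Longrightarrow> \<exists>b. b \<in> C n \<and> b \<oplus>\<^sub>c (p j \<oplus>\<^sub>c q j) \<in> C n"
    using Borel_cover_of_fibre_translate_pair[of "\<lambda>j. p j \<oplus>\<^sub>c q j" C z] cover by blast
  define j where "j = prod_encode (n, N)"
  have "p j \<in> P n" "q j \<in> P n"
    using pq(1,2)[of j] by (simp_all add: j_def)
  then show False
    using N[of j] le_prod_encode_2[of N n] disjoint_translates_difference[OF P_disjoint] pq(3)
    by (metis j_def)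
qed

lemma I0_gen_subset_I0: "B \<in> I0_gen \<Longrightarrow> B \<in> I0"
  unfolding I0_def by (intro CollectI exI[of _ "\<lambda>_. B"]) auto

theorem theorem2p1:
  shows "(\<exists>f :: cantor \<Rightarrow> cantor. continuous_on UNIV f \<and> (\<forall>x. f -` {x} \<notin> I0))
         \<and> propM I0 \<and> \<not> propD I0"
proof -
  have fibres: "\<forall>x. zero_block_map -` {x} \<notin> I0"
    using zero_block_map_fibre_not_I0 by blast
  then have "propM I0"
    unfolding propM_def using borel_measurable_continuous_onI[OF continuous_on_zero_block_map]
    by blast
  moreover have "\<not> propD I0"
    using I0_gen_subset_I0 unfolding propD_def I0_gen_def by blast
  ultimately show ?thesis
    using continuous_on_zero_block_map fibres by blast
qed

end
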